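(* Let $k\geq 3$ and let $G$ be a diregular $(2,k,+3)$-digraph. Let $u,v$ be distinct vertices with exactly one common out-neighbour $u_2$, and write $N^+(u)=\{u_1,u_2\}$, $N^+(v)=\{v_1,u_2\}$. Let $w\in T(v_1)$ with $d(v_1,w)=l$, and suppose also $w\in T(u_1)$ with $d(u_1,w)=m$. Then either $m\leq l$ or $w\in N^{k-1}(u_1)$. Symmetrically, if $w\in T(u_1)\cap T(v_1)$ with $d(u_1,w)=l$ and $d(v_1,w)=m$, then either $m\leq l$ or $w\in N^{k-1}(v_1)$.
   Context: A digraph is $k$-geodetic if for every ordered pair of vertices $x,y$ there is at most one directed path from $x$ to $y$ of length at most $k$ (the trivial path counts). A diregular $(2,k,+3)$-digraph is a $k$-geodetic digraph of order $1+2+\dots+2^k+3$ in which every vertex has in- and out-degree $2$. $N^+(x)$ is the set of out-neighbours of $x$; $N^l(x)$ is the set of end-vertices of directed paths of length $l$ starting at $x$. $d(x,y)$ is the directed distance. $T(x)=\{y: d(x,y)\leq k-1\}$. *)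

theory Defs
  imports Main
begin

text \<open>A directed path of length l from x to y is a vertex sequence xs of length l+1
  with consecutive arcs (the trivial path is [x]).\<close>

definition is_walk :: "'a set \<Rightarrow> ('a \<Rightarrow> 'a \<Rightarrow> bool) \<Rightarrow> 'a list \<Rightarrow> 'a \<Rightarrow> 'a \<Rightarrow> nat \<Rightarrow> bool" where
  "is_walk V A xs x y l \<longleftrightarrow> length xs = Suc l \<and> hd xs = x \<and> last xs = y \<and> set xs \<subseteq> V
     \<and> (\<forall>i < l. A (xs ! i) (xs ! Suc i))"

definition k_geodetic :: "'a set \<Rightarrow> ('a \<Rightarrow> 'a \<Rightarrow> bool) \<Rightarrow> nat \<Rightarrow> bool" where
  "k_geodetic V A k \<longleftrightarrow> (\<forall>x\<in>V. \<forall>y\<in>V. \<forall>p q l1 l2. l1 \<le> k \<and> l2 \<le> k \<and>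
      is_walk V A p x y l1 \<and> is_walk V A q x y l2 \<longrightarrow> p = q)"

definition out_nbrs :: "'a set \<Rightarrow> ('a \<Rightarrow> 'a \<Rightarrow> bool) \<Rightarrow> 'a \<Rightarrow> 'a set" where
  "out_nbrs V A x = {y\<in>V. A x y}"

definition in_nbrs :: "'a set \<Rightarrow> ('a \<Rightarrow> 'a \<Rightarrow> bool) \<Rightarrow> 'a \<Rightarrow> 'a set" where
  "in_nbrs V A x = {y\<in>V. A y x}"

definition is_2k3_digraph :: "'a set \<Rightarrow> ('a \<Rightarrow> 'a \<Rightarrow> bool) \<Rightarrow> nat \<Rightarrow> bool" where
  "is_2k3_digraph V A k \<longleftrightarrow> finite V \<and> (\<forall>x y. A x y \<longrightarrow> x \<in> V \<and> y \<in> V)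
     \<and> k_geodetic V A k
     \<and> (\<forall>x\<in>V. card (out_nbrs V A x) = 2 \<and> card (in_nbrs V A x) = 2)
     \<and> card V = (\<Sum>i\<le>k. 2 ^ i) + 3"

definition Nl :: "'a set \<Rightarrow> ('a \<Rightarrow> 'a \<Rightarrow> bool) \<Rightarrow> nat \<Rightarrow> 'a \<Rightarrow> 'a set" where
  "Nl V A l x = {y. \<exists>xs. is_walk V A xs x y l}"

definition dist :: "'a set \<Rightarrow> ('a \<Rightarrow> 'a \<Rightarrow> bool) \<Rightarrow> 'a \<Rightarrow> 'a \<Rightarrow> nat" where
  "dist V A x y = (LEAST l. y \<in> Nl V A l x)"

definition Tset :: "'a set \<Rightarrow> ('a \<Rightarrow> 'a \<Rightarrow> bool) \<Rightarrow> nat \<Rightarrow> 'a \<Rightarrow> 'a set" where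
  "Tset V A k x = {y. \<exists>l\<le>k - 1. y \<in> Nl V A l x}"

end

theory Submission
  imports Defs
begin

text \<open>Write c = u2. A vertex of T(v1) - T(u1) other than u cannot be reached from u within
  k steps: via u1 it would lie in T(u1), and via c the vertex v would reach it by two different
  walks of length at most k. A (2,k,+3)-digraph has exactly three such outliers per vertex, so
  |T(v1) - T(u1)| \<le> 4, and T(u1) - T(v1) has the same size. Suppose d(v1,w) = l < m = d(u1,w)
  and m \<le> k - 2 (otherwise w \<in> N^(k-1)(u1)). The 2^(k-m) \<ge> 4 vertices of N^(k-m)(w) lie
  within distance k - 1 of v1 but at distance exactly k from u1, so they fill T(v1) - T(u1);
  this forces m = k - 2 and, as v1 is not among them, v1 \<in> T(u1). Then T(u1) - T(v1) has
  four elements and so contains v; but v and v1 both in T(u1) would give two walks from u to c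
  of length at most k.\<close>

lemma Nl_0_iff: "y \<in> Nl V A 0 x \<longleftrightarrow> x \<in> V \<and> y = x"
proof
  assume "y \<in> Nl V A 0 x"
  then obtain xs where xs: "is_walk V A xs x y 0" by (auto simp: Nl_def)
  then obtain a where "xs = [a]" by (auto simp: is_walk_def length_Suc_conv)
  with xs show "x \<in> V \<and> y = x" by (auto simp: is_walk_def)
next
  assume "x \<in> V \<and> y = x"
  then have "is_walk V A [x] x y 0" by (auto simp: is_walk_def)
  then show "y \<in> Nl V A 0 x" by (auto simp: Nl_def)
qed

lemma is_walk_ends_in_V: "is_walk V A xs x y l \<Longrightarrow> x \<in> V \<and> y \<in> V"
  unfolding is_walk_def by (metis hd_in_set last_in_set list.size(3) nat.distinct(1) subsetD)

lemma Nl_ends_in_V: "y \<in> Nl V A l x \<Longrightarrow> x \<in> V \<and> y \<in> V"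
  unfolding Nl_def using is_walk_ends_in_V by fast

lemma Nl_subset_V: "Nl V A l x \<subseteq> V"
  using Nl_ends_in_V by fast

lemma is_walk_Cons:
  assumes "is_walk V A p y z l" "A x y" "x \<in> V"
  shows "is_walk V A (x # p) x z (Suc l)"
proof -
  have "p \<noteq> []" using assms(1) by (auto simp: is_walk_def)
  moreover have "p ! 0 = y" using assms(1) calculation by (simp add: is_walk_def hd_conv_nth)
  ultimately show ?thesis
    using assms unfolding is_walk_def by (auto simp: less_Suc_eq_0_disj)
qed

lemma is_walk_snoc:
  assumes "is_walk V A p x y l" "A y z" "z \<in> V"
  shows "is_walk V A (p @ [z]) x z (Suc l)"
proof -
  have "p \<noteq> []" and "length p = Suc l" using assms(1) by (auto simp: is_walk_def)
  moreover have "p ! l = y" using assms(1) calculation by (simp add: is_walk_def last_conv_nth)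
  ultimately show ?thesis
    using assms unfolding is_walk_def by (auto simp: nth_append less_Suc_eq)
qed

lemma is_walk_tl:
  assumes "is_walk V A xs x z (Suc l)"
  shows "A x (hd (tl xs)) \<and> is_walk V A (tl xs) (hd (tl xs)) z l"
proof -
  obtain ys where xs: "xs = x # ys" and "ys \<noteq> []"
    using assms by (auto simp: is_walk_def length_Suc_conv)
  moreover have "\<forall>i < Suc l. A (xs ! i) (xs ! Suc i)"
    using assms by (simp add: is_walk_def)
  ultimately show ?thesis
    using assms unfolding is_walk_def by (auto simp: hd_conv_nth)
qed

lemma k_geodetic_walk_unique:
  assumes "k_geodetic V A k" "is_walk V A p x y l1" "is_walk V A q x y l2" "l1 \<le> k" "l2 \<le> k"
  shows "p = q"
proof -
  have "x \<in> V" "y \<in> V" using is_walk_ends_in_V[OF assms(2)] by auto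
  with assms show ?thesis unfolding k_geodetic_def by blast
qed

lemma dist_le: "w \<in> Nl V A n x \<Longrightarrow> dist V A x w \<le> n"
  unfolding dist_def by (rule Least_le)

lemma Nl_dist: "w \<in> Nl V A n x \<Longrightarrow> w \<in> Nl V A (dist V A x w) x"
  unfolding dist_def by (rule LeastI)

definition reach_within :: "'a set \<Rightarrow> ('a \<Rightarrow> 'a \<Rightarrow> bool) \<Rightarrow> nat \<Rightarrow> 'a \<Rightarrow> 'a set" where
  "reach_within V A j x = (\<Union>i\<le>j. Nl V A i x)"

definition outliers :: "'a set \<Rightarrow> ('a \<Rightarrow> 'a \<Rightarrow> bool) \<Rightarrow> nat \<Rightarrow> 'a \<Rightarrow> 'a set" where
  "outliers V A k x = V - reach_within V A k x"

lemma Tset_eq_reach_within: "Tset V A k x = reach_within V A (k - 1) x"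
  unfolding Tset_def reach_within_def by auto

lemma reach_within_subset_V: "reach_within V A j x \<subseteq> V"
  unfolding reach_within_def by (intro UN_least Nl_subset_V)

lemma Tset_subset_V: "Tset V A k x \<subseteq> V"
  unfolding Tset_def using Nl_subset_V by fast

lemma card_Diff_commute:
  assumes "finite S" "finite T" "card S = card T"
  shows "card (S - T) = card (T - S)"
  using assms by (simp add: card_Diff_subset_Int Int_commute)

locale digraph =
  fixes V :: "'a set" and A :: "'a \<Rightarrow> 'a \<Rightarrow> bool"
  assumes arc_in_V: "A x y \<Longrightarrow> x \<in> V \<and> y \<in> V"
begin

lemma Nl_Suc_first: "z \<in> Nl V A (Suc l) x \<longleftrightarrow> (\<exists>y. A x y \<and> z \<in> Nl V A l y)"
proof
  assume "z \<in> Nl V A (Suc l) x"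
  then show "\<exists>y. A x y \<and> z \<in> Nl V A l y"
    unfolding Nl_def using is_walk_tl by fast
next
  assume "\<exists>y. A x y \<and> z \<in> Nl V A l y"
  then obtain y p where "A x y" "is_walk V A p y z l" by (auto simp: Nl_def)
  then have "is_walk V A (x # p) x z (Suc l)" using is_walk_Cons arc_in_V by metis
  then show "z \<in> Nl V A (Suc l) x" by (auto simp: Nl_def)
qed

lemma Nl_Suc_last: "z \<in> Nl V A (Suc l) x \<longleftrightarrow> (\<exists>y. y \<in> Nl V A l x \<and> A y z)"
proof
  assume "\<exists>y. y \<in> Nl V A l x \<and> A y z"
  then obtain y p where "A y z" "is_walk V A p x y l" by (auto simp: Nl_def)
  then have "is_walk V A (p @ [z]) x z (Suc l)" using is_walk_snoc arc_in_V by metis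
  then show "z \<in> Nl V A (Suc l) x" by (auto simp: Nl_def)
next
  show "z \<in> Nl V A (Suc l) x \<Longrightarrow> \<exists>y. y \<in> Nl V A l x \<and> A y z"
  proof (induction l arbitrary: x)
    case 0
    then obtain y where "A x y" "z \<in> Nl V A 0 y" using Nl_Suc_first by blast
    then show ?case using arc_in_V Nl_0_iff by metis
  next
    case (Suc l)
    then obtain y where y: "A x y" "z \<in> Nl V A (Suc l) y" using Nl_Suc_first by blast
    then obtain y' where "y' \<in> Nl V A l y" "A y' z" using Suc.IH by blast
    then show ?case using y Nl_Suc_first by blast
  qed
qed

lemma Nl_Suc_eq_UN_out_nbrs: "Nl V A (Suc l) x = (\<Union>y\<in>Nl V A l x. out_nbrs V A y)"
  by (auto simp: Nl_Suc_last out_nbrs_def dest: arc_in_V)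

lemma Nl_add: "y \<in> Nl V A a x \<Longrightarrow> z \<in> Nl V A b y \<Longrightarrow> z \<in> Nl V A (a + b) x"
proof (induction b arbitrary: z)
  case 0
  then show ?case by (simp add: Nl_0_iff)
next
  case (Suc b)
  then show ?case using Nl_Suc_last by (metis add_Suc_right)
qed

end

locale geodetic_digraph = digraph +
  fixes k :: nat
  assumes k_geodetic: "k_geodetic V A k"
begin

lemma Nl_length_unique:
  assumes "z \<in> Nl V A i x" "z \<in> Nl V A j x" "i \<le> k" "j \<le> k"
  shows "i = j"
proof -
  obtain p q where p: "is_walk V A p x z i" and q: "is_walk V A q x z j"
    using assms by (auto simp: Nl_def)
  then have "p = q" using k_geodetic_walk_unique[OF k_geodetic] assms(3,4) by blast
  then show ?thesis using p q by (auto simp: is_walk_def)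
qed

lemma Nl_disjoint: "i \<noteq> j \<Longrightarrow> i \<le> k \<Longrightarrow> j \<le> k \<Longrightarrow> Nl V A i x \<inter> Nl V A j x = {}"
  using Nl_length_unique by blast

lemma Nl_self: "x \<in> Nl V A n x \<Longrightarrow> n \<le> k \<Longrightarrow> n = 0"
  using Nl_length_unique[of x 0 x n] by (auto simp: Nl_0_iff dest: Nl_ends_in_V)

lemma Nl_pred_unique:
  assumes "y \<in> Nl V A j x" "y' \<in> Nl V A j x" "A y z" "A y' z" "Suc j \<le> k"
  shows "y = y'"
proof -
  obtain p q where p: "is_walk V A p x y j" and q: "is_walk V A q x y' j"
    using assms by (auto simp: Nl_def)
  have "z \<in> V" using arc_in_V assms(3) by blast
  then have "is_walk V A (p @ [z]) x z (Suc j)" "is_walk V A (q @ [z]) x z (Suc j)"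
    using is_walk_snoc p q assms(3,4) by metis+
  then have "p @ [z] = q @ [z]" using k_geodetic_walk_unique[OF k_geodetic] assms(5) by blast
  then show ?thesis using p q by (auto simp: is_walk_def)
qed

lemma Nl_first_unique:
  assumes "A x y" "A x y'" "z \<in> Nl V A i y" "z \<in> Nl V A j y'" "Suc i \<le> k" "Suc j \<le> k"
  shows "y = y'"
proof -
  obtain p q where p: "is_walk V A p y z i" and q: "is_walk V A q y' z j"
    using assms by (auto simp: Nl_def)
  have "x \<in> V" using arc_in_V assms(1) by blast
  then have "is_walk V A (x # p) x z (Suc i)" "is_walk V A (x # q) x z (Suc j)"
    using is_walk_Cons p q assms(1,2) by metis+
  then have "x # p = x # q" using k_geodetic_walk_unique[OF k_geodetic] assms(5,6) by blast
  then show ?thesis using p q by (auto simp: is_walk_def)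
qed

lemma Tset_Diff_subset_outliers:
  assumes "out_nbrs V A u = {u1, c}" "A v v1" "A v c" "v1 \<noteq> c"
  shows "Tset V A k v1 - Tset V A k u1 \<subseteq> insert u (outliers V A k u)"
proof
  fix x assume x: "x \<in> Tset V A k v1 - Tset V A k u1"
  show "x \<in> insert u (outliers V A k u)"
  proof (cases "x \<in> reach_within V A k u")
    case True
    then obtain i where "i \<le> k" "x \<in> Nl V A i u" by (auto simp: reach_within_def)
    moreover have "x \<in> Nl V A (Suc i') u \<Longrightarrow> Suc i' \<le> k \<Longrightarrow> False" for i'
    proof -
      assume "x \<in> Nl V A (Suc i') u" "Suc i' \<le> k"
      then obtain z where z: "A u z" "x \<in> Nl V A i' z" using Nl_Suc_first by blast
      have "z \<noteq> u1" using x z \<open>Suc i' \<le> k\<close> by (auto simp: Tset_def)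
      then have "z = c" using z assms(1) arc_in_V by (auto simp: out_nbrs_def)
      obtain l where "l \<le> k - 1" "x \<in> Nl V A l v1" using x by (auto simp: Tset_def)
      then have "v1 = c"
        using Nl_first_unique[OF assms(2,3)] z \<open>z = c\<close> \<open>Suc i' \<le> k\<close> by fastforce
      then show False using assms(4) by simp
    qed
    ultimately show ?thesis by (cases i) (auto simp: Nl_0_iff)
  next
    case False
    then show ?thesis using x Tset_subset_V[of V A k v1] by (auto simp: outliers_def)
  qed
qed

lemma Nl_subset_Tset_Diff:
  assumes "w \<in> Nl V A l y" "w \<in> Nl V A m x" "l < m" "m \<le> k"
  shows "Nl V A (k - m) w \<subseteq> Tset V A k y - Tset V A k x"
proof
  fix z assume z: "z \<in> Nl V A (k - m) w"
  have "z \<in> Nl V A (l + (k - m)) y" using Nl_add[OF assms(1) z] .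
  moreover have "l + (k - m) \<le> k - 1" using assms(3,4) by simp
  ultimately have "z \<in> Tset V A k y" unfolding Tset_def by blast
  moreover have "z \<notin> Tset V A k x"
  proof
    assume "z \<in> Tset V A k x"
    then obtain j where "j \<le> k - 1" "z \<in> Nl V A j x" by (auto simp: Tset_def)
    moreover have "z \<in> Nl V A k x" using Nl_add[OF assms(2) z] assms(4) by simp
    ultimately show False using Nl_length_unique assms(3,4) by fastforce
  qed
  ultimately show "z \<in> Tset V A k y - Tset V A k x" by blast
qed

lemma out_nbr_notin_Tset:
  assumes "0 < k" "A u u1" "A u c" "A v v1" "A v c" "v \<in> Tset V A k u1"
  shows "v1 \<notin> Tset V A k u1"
proof
  assume "v1 \<in> Tset V A k u1"
  then obtain b where b: "b \<le> k - 1" "v1 \<in> Nl V A b u1" by (auto simp: Tset_def)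
  obtain j where j: "j \<le> k - 1" "v \<in> Nl V A j u1" using assms(6) by (auto simp: Tset_def)
  then have "v1 \<in> Nl V A (Suc j) u1" using Nl_Suc_last assms(4) by blast
  then have "Suc j = b" using Nl_length_unique b j assms(1) by fastforce
  have "c \<in> Nl V A (Suc (Suc j)) u"
    using j assms(2,5) Nl_Suc_last Nl_Suc_first by blast
  moreover have "c \<in> Nl V A (Suc 0) u"
    using assms(3) arc_in_V Nl_Suc_first by (auto simp: Nl_0_iff)
  ultimately show False
    using Nl_length_unique \<open>Suc j = b\<close> b assms(1) by fastforce
qed

end

locale regular_geodetic_digraph = geodetic_digraph +
  fixes d :: nat
  assumes finite_V: "finite V"
    and out_degree: "x \<in> V \<Longrightarrow> card (out_nbrs V A x) = d"
begin

lemma finite_Nl: "finite (Nl V A l x)"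
  using finite_subset[OF Nl_subset_V finite_V] .

lemma finite_Tset: "finite (Tset V A j x)"
  using finite_subset[OF Tset_subset_V finite_V] .

lemma card_Nl: "x \<in> V \<Longrightarrow> j \<le> k \<Longrightarrow> card (Nl V A j x) = d ^ j"
proof (induction j)
  case 0
  then have "Nl V A 0 x = {x}" by (auto simp: Nl_0_iff)
  then show ?case by simp
next
  case (Suc j)
  have "card (\<Union>y\<in>Nl V A j x. out_nbrs V A y) = (\<Sum>y\<in>Nl V A j x. card (out_nbrs V A y))"
  proof (rule card_UN_disjoint[OF finite_Nl])
    show "\<forall>y\<in>Nl V A j x. finite (out_nbrs V A y)"
      using finite_V by (simp add: out_nbrs_def)
    show "\<forall>y\<in>Nl V A j x. \<forall>y'\<in>Nl V A j x. y \<noteq> y' \<longrightarrow> out_nbrs V A y \<inter> out_nbrs V A y' = {}"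
      using Nl_pred_unique[OF _ _ _ _ Suc.prems(2)] by (auto simp: out_nbrs_def)
  qed
  also have "\<dots> = (\<Sum>y\<in>Nl V A j x. d)"
    using out_degree Nl_subset_V[of V A j x] by (intro sum.cong) auto
  also have "\<dots> = d ^ Suc j" using Suc by simp
  finally show ?case by (simp add: Nl_Suc_eq_UN_out_nbrs)
qed

lemma card_reach_within:
  assumes "x \<in> V" "j \<le> k"
  shows "card (reach_within V A j x) = (\<Sum>i\<le>j. d ^ i)"
proof -
  have "card (reach_within V A j x) = (\<Sum>i\<le>j. card (Nl V A i x))"
    unfolding reach_within_def
  proof (rule card_UN_disjoint)
    show "\<forall>i\<in>{..j}. \<forall>i'\<in>{..j}. i \<noteq> i' \<longrightarrow> Nl V A i x \<inter> Nl V A i' x = {}"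
      using Nl_disjoint assms(2) by auto
  qed (simp_all add: finite_Nl)
  also have "\<dots> = (\<Sum>i\<le>j. d ^ i)"
    using card_Nl assms by (intro sum.cong) auto
  finally show ?thesis .
qed

lemma card_outliers:
  assumes "card V = (\<Sum>i\<le>k. d ^ i) + e" "x \<in> V"
  shows "card (outliers V A k x) = e"
proof -
  have "card (V - reach_within V A k x) = card V - card (reach_within V A k x)"
    using reach_within_subset_V by (meson card_Diff_subset finite_V rev_finite_subset)
  then show ?thesis
    unfolding outliers_def using card_reach_within[OF assms(2) order_refl] assms(1) by simp
qed

lemma card_Tset_Diff_commute:
  assumes "x \<in> V" "y \<in> V"
  shows "card (Tset V A k x - Tset V A k y) = card (Tset V A k y - Tset V A k x)"
proof (rule card_Diff_commute)
  show "card (Tset V A k x) = card (Tset V A k y)"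
    using card_reach_within[of _ "k - 1"] assms by (simp add: Tset_eq_reach_within)
qed (rule finite_Tset)+

end

locale digraph_2k3 = regular_geodetic_digraph V A k 2 for V :: "'a set" and A k +
  assumes card_V: "card V = (\<Sum>i\<le>k. 2 ^ i) + 3"

lemma is_2k3_digraph_imp_digraph_2k3: "is_2k3_digraph V A k \<Longrightarrow> digraph_2k3 V A k"
  unfolding is_2k3_digraph_def
  by unfold_locales auto

context digraph_2k3
begin

lemma out_nbrs_2_distinct: "x \<in> V \<Longrightarrow> out_nbrs V A x = {y, z} \<Longrightarrow> y \<noteq> z"
  using out_degree[of x] by auto

lemma card_Tset_Diff_remove_le:
  assumes "u \<in> V" "out_nbrs V A u = {u1, c}" "A v v1" "A v c" "v1 \<noteq> c"
  shows "card (Tset V A k v1 - Tset V A k u1 - {u}) \<le> 3"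
proof -
  have "Tset V A k v1 - Tset V A k u1 - {u} \<subseteq> outliers V A k u"
    using Tset_Diff_subset_outliers[OF assms(2-5)] by blast
  moreover have "finite (outliers V A k u)" using finite_V by (simp add: outliers_def)
  ultimately show ?thesis using card_mono card_outliers[OF card_V assms(1)] by fastforce
qed

lemma Tset_Diff_eq_Nl_2:
  assumes "u \<in> V" "out_nbrs V A u = {u1, c}" "A v v1" "A v c" "v1 \<noteq> c"
    and "w \<in> Nl V A l v1" "w \<in> Nl V A m u1" "l < m" "m + 2 \<le> k"
  shows "m + 2 = k" and "Tset V A k v1 - Tset V A k u1 = Nl V A 2 w"
proof -
  let ?S = "Tset V A k v1 - Tset V A k u1"
  have fin: "finite ?S" using finite_Tset by (rule finite_Diff)
  have "card ?S \<le> Suc (card (?S - {u}))"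
    using card_Suc_Diff1[OF fin, of u] by (cases "u \<in> ?S") auto
  then have card_S: "card ?S \<le> 4"
    using card_Tset_Diff_remove_le[OF assms(1-5)] by simp
  have sub: "Nl V A (k - m) w \<subseteq> ?S"
    using assms(8,9) by (intro Nl_subset_Tset_Diff[OF assms(6,7)]) auto
  have card_N: "card (Nl V A (k - m) w) = 2 ^ (k - m)"
    using card_Nl[of w "k - m"] Nl_ends_in_V[OF assms(6)] by simp
  have "(2::nat) ^ (k - m) \<le> 2 ^ 2"
    using card_mono[OF fin sub] card_S card_N by simp
  then have "k - m \<le> 2" by (rule power_le_imp_le_exp[rotated]) simp
  then have km: "k - m = 2" using assms(9) by simp
  then show "m + 2 = k" using assms(9) by simp
  have "Nl V A (k - m) w = ?S"
    using card_seteq[OF fin sub] card_S card_N km by simp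
  with km show "?S = Nl V A 2 w" by simp
qed

lemma Nl_length_le_of_common_out_nbr:
  assumes "u \<in> V" "v \<in> V" "out_nbrs V A u = {u1, c}" "out_nbrs V A v = {v1, c}"
    and "w \<in> Nl V A l v1" "w \<in> Nl V A m u1" "m + 2 \<le> k"
  shows "m \<le> l"
proof (rule ccontr)
  assume "\<not> m \<le> l"
  have arcs: "A u u1" "A u c" "A v v1" "A v c"
    using assms(3,4) by (auto simp: out_nbrs_def)
  then have "u1 \<in> V" "v1 \<in> V" using arc_in_V by auto
  have "u1 \<noteq> c" "v1 \<noteq> c" using out_nbrs_2_distinct assms(1-4) by auto
  have k: "m + 2 = k" and S_eq: "Tset V A k v1 - Tset V A k u1 = Nl V A 2 w"
    using Tset_Diff_eq_Nl_2[OF assms(1,3) arcs(3,4) \<open>v1 \<noteq> c\<close> assms(5,6) _ assms(7)]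
      \<open>\<not> m \<le> l\<close> by auto
  have "v1 \<notin> Nl V A 2 w"
  proof
    assume "v1 \<in> Nl V A 2 w"
    then have "v1 \<in> Nl V A (l + 2) v1" by (rule Nl_add[OF assms(5)])
    moreover have "l + 2 \<le> k" using \<open>\<not> m \<le> l\<close> k by simp
    ultimately have "l + 2 = 0" by (rule Nl_self)
    then show False by simp
  qed
  moreover have "v1 \<in> Tset V A k v1"
    using \<open>v1 \<in> V\<close> by (auto simp: Tset_def Nl_0_iff)
  ultimately have "v1 \<in> Tset V A k u1" using S_eq by blast
  have "card (Tset V A k u1 - Tset V A k v1) = 4"
    using card_Tset_Diff_commute[OF \<open>u1 \<in> V\<close> \<open>v1 \<in> V\<close>] S_eq
      card_Nl[of w 2] Nl_ends_in_V[OF assms(5)] k by simp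
  then have "v \<in> Tset V A k u1"
    using card_Tset_Diff_remove_le[OF assms(2,4) arcs(1,2) \<open>u1 \<noteq> c\<close>]
    by (cases "v \<in> Tset V A k u1 - Tset V A k v1") auto
  then have "v1 \<notin> Tset V A k u1"
    using out_nbr_notin_Tset[OF _ arcs] k by simp
  then show False using \<open>v1 \<in> Tset V A k u1\<close> by contradiction
qed

lemma dist_le_or_in_Nl:
  assumes "u \<in> V" "v \<in> V" "out_nbrs V A u = {u1, c}" "out_nbrs V A v = {v1, c}"
    and "w \<in> Tset V A k v1" "w \<in> Tset V A k u1"
  shows "dist V A u1 w \<le> dist V A v1 w \<or> w \<in> Nl V A (k - 1) u1"
proof -
  obtain l where "w \<in> Nl V A l v1" using assms(5) by (auto simp: Tset_def)
  then have wl: "w \<in> Nl V A (dist V A v1 w) v1" by (rule Nl_dist)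
  obtain m where m: "m \<le> k - 1" "w \<in> Nl V A m u1" using assms(6) by (auto simp: Tset_def)
  have wm: "w \<in> Nl V A (dist V A u1 w) u1" using m(2) by (rule Nl_dist)
  have "dist V A u1 w \<le> k - 1" using dist_le[OF m(2)] m(1) by simp
  then consider "dist V A u1 w = k - 1" | "dist V A u1 w + 2 \<le> k" by linarith
  then show ?thesis
  proof cases
    case 1
    then show ?thesis using wm by simp
  next
    case 2
    then show ?thesis using Nl_length_le_of_common_out_nbr[OF assms(1-4) wl wm] by simp
  qed
qed

end

theorem lemma4:
  fixes V :: "'a set" and A :: "'a \<Rightarrow> 'a \<Rightarrow> bool" and k :: nat
    and u v u1 u2 v1 w :: 'a
  assumes "k \<ge> 3"
    and "is_2k3_digraph V A k"
    and "u \<in> V" and "v \<in> V" and "u \<noteq> v"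
    and "out_nbrs V A u \<inter> out_nbrs V A v = {u2}"
    and "out_nbrs V A u = {u1, u2}"
    and "out_nbrs V A v = {v1, u2}"
  shows "(w \<in> Tset V A k v1 \<and> w \<in> Tset V A k u1 \<longrightarrow>
           dist V A u1 w \<le> dist V A v1 w \<or> w \<in> Nl V A (k - 1) u1)
       \<and> (w \<in> Tset V A k u1 \<and> w \<in> Tset V A k v1 \<longrightarrow>
           dist V A v1 w \<le> dist V A u1 w \<or> w \<in> Nl V A (k - 1) v1)"
proof -
  interpret digraph_2k3 V A k
    using assms(2) by (rule is_2k3_digraph_imp_digraph_2k3)
  show ?thesis
    using dist_le_or_in_Nl[OF assms(3,4,7,8)] dist_le_or_in_Nl[OF assms(4,3,8,7)] by blast
qed

end
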